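(* Let $h$ be a penalty function on $\Delta$ and let $p$ lie in the relative interior of $\Delta$. If $F_h(p,y_j)$ is bounded for a sequence $y_j\in\mathbb{R}^n$, then $y_{j,\alpha}-y_{j,\beta}$ is bounded for all $\alpha,\beta\in\{1,\dots,n\}$.
   Context: $\Delta$ is the unit simplex of $\mathbb{R}^n$. A penalty function on $\Delta$ is $h:\Delta\to\mathbb{R}$, continuous, $C^\infty$ on the relative interior of every face of $\Delta$, and strongly convex: $h(tx_1+(1-t)x_2)\le th(x_1)+(1-t)h(x_2)-\tfrac12Kt(1-t)\|x_1-x_2\|^2$ for some $K>0$. $h^*(y)=\max_{x\in\Delta}\{\langle y,x\rangle-h(x)\}$; Fenchel coupling $F_h(p,y)=h(p)+h^*(y)-\langle y,p\rangle$. *)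

theory Defs
  imports "HOL-Analysis.Analysis"
begin

definition unit_simplex :: "(real ^ 'n) set" where
  "unit_simplex = {x. (\<forall>i. 0 \<le> x $ i) \<and> (\<Sum>i\<in>UNIV. x $ i) = 1}"

text \<open>C-infinity on a set S (relative to S): all iterated directional derivatives
  along directions parallel to S (i.e. in span of S - S) exist (relative to S)
  and are continuous on S.\<close>
definition smooth_rel :: "(real ^ 'n) set \<Rightarrow> (real ^ 'n \<Rightarrow> real) \<Rightarrow> bool" where
  "smooth_rel S f \<longleftrightarrow>
     (\<exists>G. f \<in> G \<and>
        (\<forall>g\<in>G. continuous_on S g \<and> (\<forall>x\<in>S. g differentiable (at x within S)) \<and>
           (\<forall>v\<in>span {a - b | a b. a \<in> S \<and> b \<in> S}.
               (\<lambda>x. frechet_derivative g (at x within S) v) \<in> G)))"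

definition strongly_convex_on :: "(real ^ 'n) set \<Rightarrow> (real ^ 'n \<Rightarrow> real) \<Rightarrow> bool" where
  "strongly_convex_on S h \<longleftrightarrow>
     (\<exists>K>0. \<forall>x1\<in>S. \<forall>x2\<in>S. \<forall>t\<in>{0..1}.
        h (t *\<^sub>R x1 + (1 - t) *\<^sub>R x2)
          \<le> t * h x1 + (1 - t) * h x2 - 1/2 * K * t * (1 - t) * (norm (x1 - x2))\<^sup>2)"

definition penalty_function :: "(real ^ 'n \<Rightarrow> real) \<Rightarrow> bool" where
  "penalty_function h \<longleftrightarrow>
     continuous_on unit_simplex h \<and>
     (\<forall>F. F face_of unit_simplex \<longrightarrow> smooth_rel (rel_interior F) h) \<and>
     strongly_convex_on unit_simplex h"

definition conj_simplex :: "(real ^ 'n \<Rightarrow> real) \<Rightarrow> real ^ 'n \<Rightarrow> real" where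
  "conj_simplex h y = (SUP x\<in>unit_simplex. y \<bullet> x - h x)"

definition fenchel_coupling :: "(real ^ 'n \<Rightarrow> real) \<Rightarrow> real ^ 'n \<Rightarrow> real ^ 'n \<Rightarrow> real" where
  "fenchel_coupling h p y = h p + conj_simplex h y - y \<bullet> p"

end

theory Submission
  imports Defs
begin

text \<open>Since p lies in the relative interior of the simplex, the point
  q = p + t (e_\<alpha> - e_\<beta>) lies in the simplex for some t > 0. The Fenchel--Young
  inequality at q gives t (y_\<alpha> - y_\<beta>) \<le> F_h(p,y) + h(q) - h(p), an upper bound on
  y_\<alpha> - y_\<beta> uniform in y once F_h(p,y) is bounded; exchanging \<alpha> and \<beta> bounds it
  from below.\<close>

lemma norm_le_one_if_in_unit_simplex:
  assumes "x \<in> unit_simplex"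
  shows "norm x \<le> 1"
proof -
  have "norm x \<le> (\<Sum>i\<in>UNIV. \<bar>x $ i\<bar>)" by (rule norm_le_l1_cart)
  also have "\<dots> = 1" using assms by (simp add: unit_simplex_def)
  finally show ?thesis .
qed

lemma compact_unit_simplex: "compact (unit_simplex :: (real ^ 'n) set)"
proof -
  have "unit_simplex = (\<Inter>i. {x::real ^ 'n. 0 \<le> x $ i}) \<inter> {x. (\<Sum>i\<in>UNIV. x $ i) = 1}"
    unfolding unit_simplex_def by auto
  moreover have "closed (\<Inter>i. {x::real ^ 'n. 0 \<le> x $ i})"
    by (intro closed_INT ballI closed_Collect_le continuous_on_const continuous_on_component
        continuous_on_id)
  moreover have "closed {x::real ^ 'n. (\<Sum>i\<in>UNIV. x $ i) = 1}"
    by (intro closed_Collect_eq continuous_on_sum continuous_on_const continuous_on_component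
        continuous_on_id)
  ultimately have "closed (unit_simplex :: (real ^ 'n) set)" by (metis closed_Int)
  moreover have "bounded (unit_simplex :: (real ^ 'n) set)"
    unfolding bounded_iff using norm_le_one_if_in_unit_simplex by blast
  ultimately show ?thesis by (simp add: compact_eq_bounded_closed)
qed

lemma axis_in_unit_simplex: "(axis i 1 :: real ^ 'n) \<in> unit_simplex"
  by (auto simp: unit_simplex_def axis_def)

lemma rel_interior_step_in:
  fixes S :: "'a::euclidean_space set"
  assumes "p \<in> rel_interior S" "u \<in> S" "v \<in> S"
  obtains t where "t > 0" "p + t *\<^sub>R (u - v) \<in> S"
proof -
  obtain e where "e > 0" and e: "ball p e \<inter> affine hull S \<subseteq> S" and "p \<in> S"
    using assms(1) unfolding rel_interior_ball by blast
  define t where "t = e / (2 * (norm (u - v) + 1))"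
  have "t > 0" using \<open>e > 0\<close> by (simp add: t_def add_nonneg_pos)
  have "norm (t *\<^sub>R (u - v)) < e"
  proof -
    have "norm (t *\<^sub>R (u - v)) = e * norm (u - v) / (2 * (norm (u - v) + 1))"
      using \<open>t > 0\<close> \<open>e > 0\<close> by (simp add: t_def)
    also have "\<dots> < e"
      using \<open>e > 0\<close> by (simp add: pos_divide_less_eq add_nonneg_pos)
    finally show ?thesis .
  qed
  then have "p + t *\<^sub>R (u - v) \<in> ball p e" by (simp add: dist_norm)
  moreover have "p + t *\<^sub>R (u - v) \<in> affine hull S"
    by (intro mem_affine_3_minus affine_affine_hull hull_inc \<open>p \<in> S\<close> assms(2,3))
  ultimately show ?thesis using that \<open>t > 0\<close> e by blast
qed

lemma fenchel_young_unit_simplex: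
  assumes "bdd_below (h ` unit_simplex)" "x \<in> unit_simplex"
  shows "y \<bullet> x - h x \<le> conj_simplex h y"
proof -
  obtain m where m: "\<And>z. z \<in> unit_simplex \<Longrightarrow> m \<le> h z"
    using assms(1) by (auto simp: bdd_below_def)
  have "bdd_above ((\<lambda>z. y \<bullet> z - h z) ` unit_simplex)"
  proof (rule bdd_aboveI2)
    fix z :: "real ^ 'a" assume z: "z \<in> unit_simplex"
    have "y \<bullet> z \<le> norm y * norm z" by (rule norm_cauchy_schwarz)
    also have "\<dots> \<le> norm y"
      using norm_le_one_if_in_unit_simplex[OF z] by (simp add: mult_left_le)
    finally show "y \<bullet> z - h z \<le> norm y - m" using m[OF z] by linarith
  qed
  then show ?thesis
    unfolding conj_simplex_def by (rule cSUP_upper[OF assms(2)])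
qed

lemma coordinate_gap_le_fenchel_coupling:
  fixes h :: "real ^ 'n \<Rightarrow> real"
  assumes "bdd_below (h ` unit_simplex)" "p \<in> rel_interior unit_simplex"
  obtains t C where "t > 0" "\<And>y. t * (y $ a - y $ b) \<le> fenchel_coupling h p y + C"
proof -
  obtain t where "t > 0" and q: "p + t *\<^sub>R (axis a 1 - axis b 1) \<in> unit_simplex"
    using rel_interior_step_in[OF assms(2) axis_in_unit_simplex axis_in_unit_simplex] .
  define q where "q = p + t *\<^sub>R (axis a 1 - axis b 1)"
  have "t * (y $ a - y $ b) \<le> fenchel_coupling h p y + (h q - h p)" for y
  proof -
    have "y \<bullet> q = y \<bullet> p + t * (y $ a - y $ b)"
      by (simp add: q_def inner_add_right inner_diff_right inner_axis)
    moreover have "y \<bullet> q - h q \<le> conj_simplex h y"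
      using fenchel_young_unit_simplex[OF assms(1)] q by (simp add: q_def)
    ultimately show ?thesis unfolding fenchel_coupling_def by linarith
  qed
  with \<open>t > 0\<close> that show thesis by blast
qed

theorem propositionC5:
  fixes h :: "real ^ 'n \<Rightarrow> real" and p :: "real ^ 'n" and y :: "nat \<Rightarrow> real ^ 'n"
  assumes "penalty_function h"
    and "p \<in> rel_interior unit_simplex"
    and "bounded (range (\<lambda>j. fenchel_coupling h p (y j)))"
  shows "\<forall>\<alpha> \<beta>. bounded (range (\<lambda>j. y j $ \<alpha> - y j $ \<beta>))"
proof (intro allI)
  fix \<alpha> \<beta>
  have "compact (h ` unit_simplex)"
    using assms(1) compact_unit_simplex compact_continuous_image
    by (auto simp: penalty_function_def)
  then have h_below: "bdd_below (h ` unit_simplex)"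
    by (simp add: compact_imp_bounded bounded_imp_bdd_below)
  obtain B where B: "\<And>j. fenchel_coupling h p (y j) \<le> B"
    using bounded_imp_bdd_above[OF assms(3)] by (auto simp: bdd_above_def)
  have gap_le: "\<exists>G. \<forall>j. y j $ a - y j $ b \<le> G" for a b :: 'n
  proof -
    obtain t C where "t > 0" and "\<And>z. t * (z $ a - z $ b) \<le> fenchel_coupling h p z + C"
      using coordinate_gap_le_fenchel_coupling[OF h_below assms(2), of a b] by blast
    then have "y j $ a - y j $ b \<le> (B + C) / t" for j
      using B[of j] by (simp add: field_simps) (smt (verit))
    then show ?thesis by blast
  qed
  obtain G1 G2 where "\<And>j. y j $ \<alpha> - y j $ \<beta> \<le> G1" "\<And>j. y j $ \<beta> - y j $ \<alpha> \<le> G2"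
    using gap_le[of \<alpha> \<beta>] gap_le[of \<beta> \<alpha>] by blast
  then have "\<bar>y j $ \<alpha> - y j $ \<beta>\<bar> \<le> max G1 G2" for j
    by (smt (verit))
  then show "bounded (range (\<lambda>j. y j $ \<alpha> - y j $ \<beta>))"
    unfolding bounded_real by blast
qed

end
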